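(* Let $G=(V,E)$ be a finite connected directed graph with $(i,j)\in E$ if and only if $(j,i)\in E$, and write $\partial i=\{j\in V:(j,i)\in E\}$. Let $f=(f_{ij})_{(i,j)\in E}$ with each $f_{ij}:\mathbb{R}\to\mathbb{R}$ continuous and strictly increasing and $f_{ij}(x)=-f_{ji}(-x)$. Let $(\phi,\pi)$ and $(\phi^*,\pi^* )$, with $\phi,\phi^*:E\to\mathbb{R}$ skew-symmetric and $\pi,\pi^*:V\to\mathbb{R}$, satisfy $\sum_{j\in\partial i}\phi_{ji}+q_i=0$, $\sum_{j\in\partial i}\phi^*_{ji}+q^*_i=0$ for all $i\in V$, and $\pi_j-\pi_i=-f_{ij}(\phi_{ij})$, $\pi^*_j-\pi^*_i=-f_{ij}(\phi^*_{ij})$ for all $(i,j)\in E$, for productions $q,q^*:V\to\mathbb{R}$. Let $T\subset V$ be non-empty. If $\pi_t\ge\pi_t^*$ for all $t\in T$ and $q_i\ge q_i^*$ for all $i\in V\setminus T$, then $\pi_u\ge\pi_u^*$ for every $u\in V\setminus T$. Moreover, if $q_u>q_u^*$, then $\pi_u>\pi_u^*$. *)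

theory Defs
  imports Complex_Main
begin

definition sym_graph :: "'a set \<Rightarrow> ('a \<times> 'a) set \<Rightarrow> bool" where
  "sym_graph V E \<longleftrightarrow> finite V \<and> E \<subseteq> V \<times> V \<and> (\<forall>i j. (i, j) \<in> E \<longleftrightarrow> (j, i) \<in> E)"

definition graph_connected :: "'a set \<Rightarrow> ('a \<times> 'a) set \<Rightarrow> bool" where
  "graph_connected V E \<longleftrightarrow> (\<forall>u\<in>V. \<forall>v\<in>V. (u, v) \<in> E\<^sup>*)"

definition in_nbhd :: "'a set \<Rightarrow> ('a \<times> 'a) set \<Rightarrow> 'a \<Rightarrow> 'a set" where
  "in_nbhd V E i = {j \<in> V. (j, i) \<in> E}"

definition is_solution ::
  "'a set \<Rightarrow> ('a \<times> 'a) set \<Rightarrow> ('a \<Rightarrow> 'a \<Rightarrow> real \<Rightarrow> real) \<Rightarrow> ('a \<Rightarrow> real)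
    \<Rightarrow> ('a \<Rightarrow> 'a \<Rightarrow> real) \<Rightarrow> ('a \<Rightarrow> real) \<Rightarrow> bool" where
  "is_solution V E f q phi p \<longleftrightarrow>
     (\<forall>(i, j)\<in>E. phi i j = - phi j i) \<and>
     (\<forall>i\<in>V. (\<Sum>j\<in>in_nbhd V E i. phi j i) + q i = 0) \<and>
     (\<forall>(i, j)\<in>E. p j - p i = - f i j (phi i j))"

end

theory Submission
  imports Defs
begin

text \<open>Compare the two solutions through the potential gap \<open>p - ps\<close>. Since every \<open>f i j\<close> is
  strictly increasing, the flow \<open>phi i j\<close> exceeds \<open>phis i j\<close> exactly when the gap drops along
  the edge \<open>(i, j)\<close>. At a vertex where the gap is minimal among its neighbours all outgoing
  flows of the first solution are therefore dominated, so its production is at most the other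
  one; if the productions are ordered the other way, the gap is constant on the neighbourhood.
  A negative minimum of the gap outside \<open>T\<close> would thus spread along the connected graph into
  \<open>T\<close>, where the gap is nonnegative.\<close>

lemma is_solution_production:
  assumes "sym_graph V E" and "is_solution V E f q phi p" and "i \<in> V"
  shows "q i = (\<Sum>j\<in>in_nbhd V E i. phi i j)"
proof -
  have "(\<Sum>j\<in>in_nbhd V E i. phi j i) + q i = 0"
    using assms(2,3) unfolding is_solution_def by blast
  moreover have "(\<Sum>j\<in>in_nbhd V E i. phi j i) = (\<Sum>j\<in>in_nbhd V E i. - phi i j)"
    by (rule sum.cong) (use assms(2) in \<open>auto simp: is_solution_def in_nbhd_def\<close>)
  ultimately show ?thesis by (simp add: sum_negf)
qed

lemma is_solution_edge_gap:
  assumes "is_solution V E f q phi p" and "is_solution V E f qs phis ps" and "(i, j) \<in> E"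
  shows "f i j (phis i j) - f i j (phi i j) = (p j - ps j) - (p i - ps i)"
proof -
  have "p j - p i = - f i j (phi i j)" and "ps j - ps i = - f i j (phis i j)"
    using assms unfolding is_solution_def by blast+
  then show ?thesis by linarith
qed

lemma flow_le_iff_gap_le:
  assumes mono: "strict_mono (f i j)"
    and "is_solution V E f q phi p" and "is_solution V E f qs phis ps" and "(i, j) \<in> E"
  shows "phi i j \<le> phis i j \<longleftrightarrow> p i - ps i \<le> p j - ps j"
    and "phi i j = phis i j \<longleftrightarrow> p i - ps i = p j - ps j"
proof -
  have gap: "f i j (phis i j) - f i j (phi i j) = (p j - ps j) - (p i - ps i)"
    using is_solution_edge_gap assms(2-4) .
  show "phi i j \<le> phis i j \<longleftrightarrow> p i - ps i \<le> p j - ps j"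
    using gap strict_mono_less_eq[OF mono, of "phi i j" "phis i j"] by linarith
  show "phi i j = phis i j \<longleftrightarrow> p i - ps i = p j - ps j"
    using gap strict_mono_eq[OF mono, of "phi i j" "phis i j"] by linarith
qed

lemma production_comparison_at_local_min_gap:
  assumes graph: "sym_graph V E"
    and mono: "\<And>i j. (i, j) \<in> E \<Longrightarrow> strict_mono (f i j)"
    and sol: "is_solution V E f q phi p" and sols: "is_solution V E f qs phis ps"
    and i: "i \<in> V"
    and local_min: "\<And>j. j \<in> in_nbhd V E i \<Longrightarrow> p i - ps i \<le> p j - ps j"
  shows "q i \<le> qs i"
    and "qs i \<le> q i \<Longrightarrow> j \<in> in_nbhd V E i \<Longrightarrow> p j - ps j = p i - ps i"
proof -
  let ?N = "in_nbhd V E i"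
  have edge: "(i, j) \<in> E" if "j \<in> ?N" for j
    using graph that unfolding sym_graph_def in_nbhd_def by auto
  have flow_le: "phi i j \<le> phis i j" if "j \<in> ?N" for j
    using flow_le_iff_gap_le(1)[OF mono[OF edge[OF that]] sol sols edge[OF that]]
      local_min[OF that] by simp
  have q: "q i = (\<Sum>j\<in>?N. phi i j)" and qs: "qs i = (\<Sum>j\<in>?N. phis i j)"
    using is_solution_production[OF graph sol i] is_solution_production[OF graph sols i] .
  show "q i \<le> qs i"
    unfolding q qs by (rule sum_mono) (rule flow_le)
  assume "qs i \<le> q i" and j: "j \<in> ?N"
  then have "(\<Sum>k\<in>?N. phis i k - phi i k) = 0"
    using \<open>q i \<le> qs i\<close> unfolding q qs by (simp add: sum_subtractf)
  moreover have "finite ?N"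
    using graph unfolding sym_graph_def in_nbhd_def by auto
  ultimately have "\<forall>k\<in>?N. phis i k - phi i k = 0"
    using sum_nonneg_eq_0_iff[of ?N "\<lambda>k. phis i k - phi i k"] flow_le by simp
  with j have "phi i j = phis i j" by simp
  then show "p j - ps j = p i - ps i"
    using flow_le_iff_gap_le(2)[OF mono[OF edge[OF j]] sol sols edge[OF j]] by simp
qed

lemma graph_connected_closed_superset:
  assumes "graph_connected V E" and "s \<in> V" and "s \<in> S"
    and closed: "\<And>y z. y \<in> S \<Longrightarrow> (y, z) \<in> E \<Longrightarrow> z \<in> S"
  shows "V \<subseteq> S"
proof
  fix v assume "v \<in> V"
  with assms(1,2) have "(s, v) \<in> E\<^sup>*" unfolding graph_connected_def by blast
  then show "v \<in> S"
    by (induction rule: rtrancl_induct) (use \<open>s \<in> S\<close> closed in blast)+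
qed

lemma potential_comparison:
  assumes graph: "sym_graph V E" and conn: "graph_connected V E"
    and mono: "\<And>i j. (i, j) \<in> E \<Longrightarrow> strict_mono (f i j)"
    and sol: "is_solution V E f q phi p" and sols: "is_solution V E f qs phis ps"
    and T: "T \<subseteq> V" "T \<noteq> {}"
    and hT: "\<And>t. t \<in> T \<Longrightarrow> ps t \<le> p t"
    and hq: "\<And>i. i \<in> V - T \<Longrightarrow> qs i \<le> q i"
    and u: "u \<in> V"
  shows "ps u \<le> p u"
proof (rule ccontr)
  define d where "d v = p v - ps v" for v
  assume "\<not> ps u \<le> p u"
  then have "d u < 0" unfolding d_def by simp
  have "finite V" using graph unfolding sym_graph_def by simp
  define m where "m = Min (d ` V)"
  have m_le: "m \<le> d v" if "v \<in> V" for v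
    unfolding m_def using \<open>finite V\<close> that by simp
  have "m \<in> d ` V"
    unfolding m_def using \<open>finite V\<close> u by (intro Min_in) auto
  then obtain s where s: "s \<in> V" "d s = m" by auto
  define S where "S = {v \<in> V. d v = m}"
  have S_disjoint_T: "v \<notin> T" if "v \<in> S" for v
    using hT m_le[OF u] \<open>d u < 0\<close> that unfolding S_def d_def by force
  have "z \<in> S" if y: "y \<in> S" and yz: "(y, z) \<in> E" for y z
  proof -
    have yV: "y \<in> V" and dy: "d y = m" using y unfolding S_def by auto
    have z: "z \<in> in_nbhd V E y"
      using graph yz unfolding sym_graph_def in_nbhd_def by auto
    have "d z = d y"
      using production_comparison_at_local_min_gap(2)[OF graph mono sol sols yV _ _ z]
        m_le hq yV S_disjoint_T[OF y] dy unfolding d_def in_nbhd_def by auto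
    with z dy show ?thesis unfolding S_def in_nbhd_def by auto
  qed
  then have "V \<subseteq> S"
    using graph_connected_closed_superset[OF conn s(1)] s unfolding S_def by blast
  with T S_disjoint_T show False by blast
qed

theorem corollary1:
  fixes V :: "'a set" and E :: "('a \<times> 'a) set"
    and f :: "'a \<Rightarrow> 'a \<Rightarrow> real \<Rightarrow> real"
    and phi phis :: "'a \<Rightarrow> 'a \<Rightarrow> real"
    and p ps q qs :: "'a \<Rightarrow> real"
    and T :: "'a set"
  assumes graph: "sym_graph V E" and conn: "graph_connected V E"
    and f_cont: "\<And>i j. (i, j) \<in> E \<Longrightarrow> continuous_on UNIV (f i j)"
    and f_mono: "\<And>i j. (i, j) \<in> E \<Longrightarrow> strict_mono (f i j)"
    and f_odd: "\<And>i j x. (i, j) \<in> E \<Longrightarrow> f i j x = - f j i (- x)"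
    and sol: "is_solution V E f q phi p"
    and sols: "is_solution V E f qs phis ps"
    and T: "T \<subseteq> V" "T \<noteq> {}"
    and hT: "\<And>t. t \<in> T \<Longrightarrow> p t \<ge> ps t"
    and hq: "\<And>i. i \<in> V - T \<Longrightarrow> q i \<ge> qs i"
  shows "(\<forall>u\<in>V - T. p u \<ge> ps u) \<and> (\<forall>u\<in>V - T. q u > qs u \<longrightarrow> p u > ps u)"
proof -
  have gap_nonneg: "ps v \<le> p v" if "v \<in> V" for v
    using potential_comparison[OF graph conn f_mono sol sols T hT hq that] .
  have "p u > ps u" if u: "u \<in> V - T" and "q u > qs u" for u
  proof (rule ccontr)
    assume "\<not> p u > ps u"
    with gap_nonneg u have "p u - ps u = 0" by force
    then have "p u - ps u \<le> p j - ps j" if "j \<in> in_nbhd V E u" for j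
      using gap_nonneg that unfolding in_nbhd_def by force
    then have "q u \<le> qs u"
      using production_comparison_at_local_min_gap(1)[OF graph f_mono sol sols] u by blast
    with \<open>q u > qs u\<close> show False by simp
  qed
  then show ?thesis using gap_nonneg by blast
qed

end
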